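(* For every positive integer $r$, $$\int_0^{\frac{\pi}{2}}\sin^{2r-1}x\,\cos\frac{x}{2}\,\mathrm{d}x=\frac{6\cdot 16^{r-1}}{r\binom{4r}{2r}}\left(\frac{4}{3}-\sqrt{2}\sum_{k=0}^{r-1} \frac{\binom{4k}{2k}}{(6k+3)16^k}\right).$$ *)

theory Defs
  imports "HOL-Analysis.Analysis"
begin

end

theory Submission
  imports Defs
begin

text \<open>
  Write \<open>I n\<close> for the integral of \<open>sin x ^ n * cos (x/2)\<close> over \<open>[0, pi/2]\<close>.
  Differentiating \<open>sin x ^ m * (2 (m + 1) cos x cos (x/2) + sin x sin (x/2))\<close> and using
  \<open>cos\<^sup>2 = 1 - sin\<^sup>2\<close> yields a combination of \<open>sin x ^ (m - 1) cos (x/2)\<close> and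
  \<open>sin x ^ (m + 1) cos (x/2)\<close> only; the boundary term at \<open>pi/2\<close> is \<open>sin (pi/4) = sqrt 2 / 2\<close>.
  The case \<open>m = 0\<close> gives \<open>I 1 = 4/3 - sqrt 2 / 3\<close>, the cases \<open>m > 0\<close> a two-step recurrence,
  and the closed form for odd exponents follows by induction, the polynomial factors of the
  recurrence being absorbed by the ratio of consecutive central binomial coefficients.
\<close>

lemma central_binomial_Suc:
  "(n + 1) * (2 * n + 2 choose (n + 1)) = 2 * (2 * n + 1) * (2 * n choose n)"
proof -
  have Suc_eqs: "Suc n = n + 1" "Suc (2 * n) = 2 * n + 1" "Suc (2 * n + 1) = 2 * n + 2"
    by simp_all
  have "(n + 1) * (2 * n + 2 choose (n + 1)) = (2 * n + 2) * (2 * n + 1 choose n)"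
    using Suc_times_binomial[of n "2 * n + 1"] unfolding Suc_eqs .
  also have "2 * n + 1 choose n = 2 * n + 1 choose (n + 1)"
    using central_binomial_odd[of "2 * n + 1"] by simp
  finally have "(n + 1) * ((n + 1) * (2 * n + 2 choose (n + 1)))
      = (2 * n + 2) * ((n + 1) * (2 * n + 1 choose (n + 1)))"
    by (metis mult.left_commute)
  also have "(n + 1) * (2 * n + 1 choose (n + 1)) = (2 * n + 1) * (2 * n choose n)"
    using Suc_times_binomial[of n "2 * n"] unfolding Suc_eqs .
  also have "(2 * n + 2) * ((2 * n + 1) * C) = (n + 1) * (2 * (2 * n + 1) * C)" for C :: nat
    by (simp add: algebra_simps)
  finally have "(n + 1) * ((n + 1) * (2 * n + 2 choose (n + 1)))
      = (n + 1) * (2 * (2 * n + 1) * (2 * n choose n))" .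
  then show ?thesis
    by (metis add_is_0 mult_left_cancel zero_neq_one)
qed

lemma central_binomial_Suc_Suc_real:
  "real (2 * n + 4 choose (n + 2)) * ((real n + 2) * (real n + 1))
     = 4 * (2 * real n + 3) * (2 * real n + 1) * real (2 * n choose n)"
proof -
  define C0 where "C0 = real (2 * n choose n)"
  define C1 where "C1 = real (2 * n + 2 choose (n + 1))"
  define C2 where "C2 = real (2 * n + 4 choose (n + 2))"
  have "n + 1 + 1 = n + 2" "2 * (n + 1) + 2 = 2 * n + 4" "2 * (n + 1) + 1 = 2 * n + 3"
      "2 * (n + 1) = 2 * n + 2"
    by simp_all
  then have "real ((n + 2) * (2 * n + 4 choose (n + 2)))
      = real (2 * (2 * n + 3) * (2 * n + 2 choose (n + 1)))"
    using central_binomial_Suc[of "n + 1"] by metis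
  then have C2_rec: "(real n + 2) * C2 = 2 * (2 * real n + 3) * C1"
    unfolding C1_def C2_def by (simp only: of_nat_mult of_nat_add of_nat_numeral)
  have "real ((n + 1) * (2 * n + 2 choose (n + 1))) = real (2 * (2 * n + 1) * (2 * n choose n))"
    using central_binomial_Suc[of n] by (rule arg_cong)
  then have C1_rec: "(real n + 1) * C1 = 2 * (2 * real n + 1) * C0"
    unfolding C0_def C1_def by (simp only: of_nat_mult of_nat_add of_nat_numeral of_nat_1)
  have "C2 * ((real n + 2) * (real n + 1)) = ((real n + 2) * C2) * (real n + 1)"
    by (simp only: mult_ac)
  also have "\<dots> = 2 * (2 * real n + 3) * ((real n + 1) * C1)"
    unfolding C2_rec by (simp only: mult_ac)
  also have "\<dots> = 4 * (2 * real n + 3) * (2 * real n + 1) * C0"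
    unfolding C1_rec by (simp only: mult_ac mult_numeral_left_semiring_numeral num_double)
  finally show ?thesis
    unfolding C0_def C2_def .
qed

lemma DERIV_sin_power_cos_half_primitive:
  "((\<lambda>x. sin x ^ m * (2 * (real m + 1) * cos x * cos (x/2) + sin x * sin (x/2)))
    has_real_derivative
      2 * (real m + 1) * real m * (sin x ^ (m - 1) * cos (x/2))
      - (2 * (real m + 1)\<^sup>2 - 1/2) * (sin x ^ (m + 1) * cos (x/2))) (at x)"
proof -
  define s where "s = sin x"
  define c where "c = cos x"
  define g where "g = cos (x/2)"
  define h where "h = sin (x/2)"
  define p where "p = s ^ (m - 1)"
  define q where "q = s ^ m"
  have deriv: "((\<lambda>x. sin x ^ m * (2 * (real m + 1) * cos x * cos (x/2) + sin x * sin (x/2)))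
    has_real_derivative
      real m * p * c * (2 * (real m + 1) * c * g + s * h)
      + q * (- 2 * (real m + 1) * s * g - real m * c * h + s * g / 2)) (at x)"
    unfolding s_def c_def g_def h_def p_def q_def
    by (auto intro!: derivative_eq_intros simp: algebra_simps)
  have pythagoras: "c * c + s * s = 1"
    by (simp add: s_def c_def)
  have power_pred: "real m * p * s = real m * q"
    by (cases m) (simp_all add: p_def q_def)
  have "real m * p * c * (2 * (real m + 1) * c * g + s * h)
          + q * (- 2 * (real m + 1) * s * g - real m * c * h + s * g / 2)
        - (2 * (real m + 1) * real m * (p * g) - (2 * (real m + 1)\<^sup>2 - 1/2) * (q * s * g))
      = 2 * real m * (real m + 1) * p * g * (c * c + s * s - 1)
          + (c * h - 2 * (real m + 1) * s * g) * (real m * p * s - real m * q)"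
    by (simp add: algebra_simps power2_eq_square)
  also have "\<dots> = 0"
    unfolding pythagoras power_pred by simp
  finally have "real m * p * c * (2 * (real m + 1) * c * g + s * h)
          + q * (- 2 * (real m + 1) * s * g - real m * c * h + s * g / 2)
      = 2 * (real m + 1) * real m * (p * g) - (2 * (real m + 1)\<^sup>2 - 1/2) * (q * s * g)"
    unfolding right_minus_eq .
  moreover have "2 * (real m + 1) * real m * (p * g) - (2 * (real m + 1)\<^sup>2 - 1/2) * (q * s * g)
      = 2 * (real m + 1) * real m * (sin x ^ (m - 1) * cos (x/2))
        - (2 * (real m + 1)\<^sup>2 - 1/2) * (sin x ^ (m + 1) * cos (x/2))"
    by (simp add: p_def q_def s_def g_def algebra_simps)
  ultimately show ?thesis
    using deriv by metis
qed

definition sin_power_cos_half_integral :: "nat \<Rightarrow> real" where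
  "sin_power_cos_half_integral n = integral {0..pi/2} (\<lambda>x. sin x ^ n * cos (x/2))"

lemma sin_power_cos_half_integrable:
  "(\<lambda>x. sin x ^ n * cos (x/2)) integrable_on {0..pi/2}"
  by (intro integrable_continuous_interval continuous_intros) simp

text \<open>For \<open>m = 0\<close> the truncated index \<open>m - 1\<close> is harmless: its coefficient vanishes, and the
  primitive is \<open>2\<close> rather than \<open>0\<close> at the lower limit.\<close>

lemma sin_power_cos_half_integral_identity:
  "2 * (real m + 1) * real m * sin_power_cos_half_integral (m - 1)
     - (2 * (real m + 1)\<^sup>2 - 1/2) * sin_power_cos_half_integral (m + 1)
   = sqrt 2 / 2 - (if m = 0 then 2 else 0)"
proof -
  define G where
    "G = (\<lambda>x. sin x ^ m * (2 * (real m + 1) * cos x * cos (x/2) + sin x * sin (x/2)))"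
  define g where
    "g = (\<lambda>x. 2 * (real m + 1) * real m * (sin x ^ (m - 1) * cos (x/2))
           - (2 * (real m + 1)\<^sup>2 - 1/2) * (sin x ^ (m + 1) * cos (x/2)))"
  have "(g has_integral G (pi/2) - G 0) {0..pi/2}"
  proof (rule fundamental_theorem_of_calculus)
    fix x
    show "(G has_vector_derivative g x) (at x within {0..pi/2})"
      using has_field_derivative_at_within[OF DERIV_sin_power_cos_half_primitive]
      unfolding has_real_derivative_iff_has_vector_derivative G_def g_def .
  qed simp
  then have "integral {0..pi/2} g = G (pi/2) - G 0"
    by (rule integral_unique)
  moreover have "integral {0..pi/2} g
      = 2 * (real m + 1) * real m * sin_power_cos_half_integral (m - 1)
        - (2 * (real m + 1)\<^sup>2 - 1/2) * sin_power_cos_half_integral (m + 1)"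
    unfolding g_def sin_power_cos_half_integral_def
    by (simp only: integral_diff integral_mult_right integrable_on_mult_right
        sin_power_cos_half_integrable)
  moreover have "G (pi/2) - G 0 = sqrt 2 / 2 - (if m = 0 then 2 else 0)"
    by (simp add: G_def sin_45)
  ultimately show ?thesis by simp
qed

lemma sin_power_cos_half_integral_1:
  "sin_power_cos_half_integral 1 = 4/3 - sqrt 2 / 3"
  using sin_power_cos_half_integral_identity[of 0] by simp

lemma sin_power_cos_half_integral_Suc_Suc:
  "(2 * (real n + 2)\<^sup>2 - 1/2) * sin_power_cos_half_integral (n + 2)
     = 2 * (real n + 2) * (real n + 1) * sin_power_cos_half_integral n - sqrt 2 / 2"
  using sin_power_cos_half_integral_identity[of "n + 1"] by (simp add: algebra_simps)

definition sin_power_cos_half_closed_form :: "nat \<Rightarrow> real" where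
  "sin_power_cos_half_closed_form q =
     6 * 16 ^ q / ((real q + 1) * real ((4 * q + 4) choose (2 * q + 2))) *
     (4/3 - sqrt 2 * (\<Sum>k=0..q. real ((4 * k) choose (2 * k)) / ((6 * real k + 3) * 16 ^ k)))"

lemma sin_power_cos_half_closed_form_coefficient_Suc:
  "(4 * real q + 5) * (4 * real q + 7) *
     (6 * 16 ^ Suc q / ((real q + 2) * real ((4 * q + 8) choose (2 * q + 4))))
   = 48 * (2 * real q + 3) * 16 ^ q / real ((4 * q + 4) choose (2 * q + 2))"
proof -
  define B where "B = real ((4 * q + 4) choose (2 * q + 2))"
  define B' where "B' = real ((4 * q + 8) choose (2 * q + 4))"
  define K where "K = (4 * real q + 5) * (4 * real q + 7)"
  have B_pos: "B > 0" and K_pos: "K > 0"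
    by (simp_all add: B_def K_def)
  have "2 * (2 * q + 2) + 4 = 4 * q + 8" "2 * q + 2 + 2 = 2 * q + 4" "2 * (2 * q + 2) = 4 * q + 4"
      "real (2 * q + 2) = 2 * real q + 2"
    by simp_all
  then have "B' * ((2 * real q + 2 + 2) * (2 * real q + 2 + 1))
      = 4 * (2 * (2 * real q + 2) + 3) * (2 * (2 * real q + 2) + 1) * B"
    using central_binomial_Suc_Suc_real[of "2 * q + 2"] unfolding B_def B'_def by metis
  then have "B' * ((2 * real q + 4) * (2 * real q + 3)) = 4 * K * B"
    by (simp add: K_def algebra_simps)
  then have "(real q + 2) * B' = 2 * K * B / (2 * real q + 3)"
    by (simp add: field_simps)
  then have "K * (6 * 16 ^ Suc q / ((real q + 2) * B')) = K * (6 * 16 ^ Suc q / (2 * K * B / (2 * real q + 3)))"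
    by simp
  also have "\<dots> = 48 * (2 * real q + 3) * 16 ^ q / B"
    using B_pos K_pos by (simp add: field_simps)
  finally show ?thesis
    unfolding K_def B_def B'_def .
qed

lemma sin_power_cos_half_closed_form_Suc:
  "(4 * real q + 5) * (4 * real q + 7) * sin_power_cos_half_closed_form (Suc q)
     = 8 * (real q + 1) * (2 * real q + 3) * sin_power_cos_half_closed_form q - sqrt 2"
proof -
  define b where "b = (\<lambda>k. real ((4 * k) choose (2 * k)) / ((6 * real k + 3) * 16 ^ k))"
  define B where "B = real ((4 * q + 4) choose (2 * q + 2))"
  define c where "c = 6 * 16 ^ q / ((real q + 1) * B)"
  define c' where "c' = 6 * 16 ^ Suc q / ((real q + 2) * real ((4 * q + 8) choose (2 * q + 4)))"
  define K where "K = (4 * real q + 5) * (4 * real q + 7)"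
  have B_pos: "B > 0"
    by (simp add: B_def)
  have c_eq: "(real q + 1) * c = 6 * 16 ^ q / B"
    unfolding c_def times_divide_eq_right by (rule nonzero_mult_divide_mult_cancel_left) simp
  have "K * c' = 48 * (2 * real q + 3) * 16 ^ q / B"
    unfolding K_def c'_def B_def by (rule sin_power_cos_half_closed_form_coefficient_Suc)
  then have c'_rec: "K * c' = 8 * (2 * real q + 3) * ((real q + 1) * c)"
    unfolding c_eq by simp
  have "4 * Suc q = 4 * q + 4" "2 * Suc q = 2 * q + 2" "real (Suc q) = real q + 1"
    by simp_all
  then have "b (Suc q) = B / ((6 * (real q + 1) + 3) * 16 ^ Suc q)"
    unfolding b_def B_def by (simp only:)
  also have "(6 * (real q + 1) + 3) * 16 ^ Suc q = 8 * (2 * real q + 3) * (6 * 16 ^ q)"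
    by simp
  finally have "K * c' * b (Suc q) = 1"
    unfolding c'_rec c_eq using B_pos by (simp add: add_pos_nonneg)
  then have "K * (c' * (4/3 - sqrt 2 * sum b {0..Suc q}))
      = K * c' * (4/3 - sqrt 2 * sum b {0..q}) - sqrt 2"
    by (simp add: algebra_simps)
  also have "\<dots> = 8 * (real q + 1) * (2 * real q + 3) * (c * (4/3 - sqrt 2 * sum b {0..q})) - sqrt 2"
    unfolding c'_rec by (simp add: algebra_simps)
  finally have "K * (c' * (4/3 - sqrt 2 * sum b {0..Suc q}))
      = 8 * (real q + 1) * (2 * real q + 3) * (c * (4/3 - sqrt 2 * sum b {0..q})) - sqrt 2" .
  moreover have "4 * Suc q + 4 = 4 * q + 8" "2 * Suc q + 2 = 2 * q + 4"
      "real (Suc q) + 1 = real q + 2"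
    by simp_all
  ultimately show ?thesis
    unfolding sin_power_cos_half_closed_form_def K_def c'_def c_def B_def b_def
    by presburger
qed

lemma sin_power_cos_half_integral_odd:
  "sin_power_cos_half_integral (2 * q + 1) = sin_power_cos_half_closed_form q"
proof (induction q)
  case 0
  show ?case
    using sin_power_cos_half_integral_1
    by (simp add: sin_power_cos_half_closed_form_def numeral_eq_Suc)
next
  case (Suc q)
  have "(4 * real q + 5) * (4 * real q + 7) * sin_power_cos_half_integral (2 * q + 1 + 2)
      = 8 * (real q + 1) * (2 * real q + 3) * sin_power_cos_half_integral (2 * q + 1) - sqrt 2"
    using sin_power_cos_half_integral_Suc_Suc[of "2 * q + 1"]
    by (simp add: power2_eq_square algebra_simps)
  also have "\<dots> = (4 * real q + 5) * (4 * real q + 7) * sin_power_cos_half_closed_form (Suc q)"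
    unfolding Suc.IH sin_power_cos_half_closed_form_Suc ..
  finally show ?case
    by (simp add: add_pos_nonneg)
qed

theorem proposition4p0p2:
  fixes r :: nat
  assumes "r \<ge> 1"
  shows "integral {0..pi/2} (\<lambda>x. sin x ^ (2*r - 1) * cos (x/2)) =
    6 * 16 ^ (r - 1) / (real r * real ((4*r) choose (2*r))) *
    (4/3 - sqrt 2 * (\<Sum>k=0..r-1. real ((4*k) choose (2*k)) / ((6 * real k + 3) * 16 ^ k)))"
proof -
  obtain q where r: "r = Suc q"
    using assms by (cases r) auto
  then have r_eqs: "4 * r = 4 * q + 4" "2 * r = 2 * q + 2" "2 * q + 2 - 1 = 2 * q + 1"
      "r - 1 = q" "real r = real q + 1"
    by simp_all
  show ?thesis
    unfolding r_eqs
    using sin_power_cos_half_integral_odd[of q]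
    unfolding sin_power_cos_half_integral_def sin_power_cos_half_closed_form_def .
qed

end
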